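(* Let $A,B\in\mathrm{GL}(\mathcal S)$ satisfy $A|_{\Delta_0}=B|_{\Delta_0}$. Then $A=B$.
   Context: Work over an algebraically closed field of characteristic $\neq2$. $F(X)=\sum_{i=0}^6f_iX^i$, $f_6\neq0$, distinct roots $\theta_1,\dots,\theta_6$. $P_j(X)=\prod_{i\ne j}(X-\theta_i)$, $\omega_j=P_j(\theta_j)$. Points of $\mathbb P^5$ are identified with $P(X)=\sum_{j=0}^5p_jX^j$; $\pi_j=P(\theta_j)/\omega_j$. $\mathcal S\subset\mathbb P^5$ is the smooth surface defined by $\sum_j\theta_j^i\omega_j\pi_j^2=0$, $i=0,1,2$. $\varepsilon^{(i)}$ is the involution $\pi_j\mapsto(-1)^{\delta_{ij}}\pi_j$; $\mathrm{Inv}(\mathcal S)$ is the group of order 32 generated by them. $\Delta_0=\{(p_0:p_1:0:0:0:0)\}$, $\Delta_i=\varepsilon^{(i)}(\Delta_0)$, $\Delta_{ij}=\varepsilon^{(i)}\varepsilon^{(j)}(\Delta_0)$, $\Delta_{ijk}=\varepsilon^{(i)}\varepsilon^{(j)}\varepsilon^{(k)}(\Delta_0)$; these are 32 lines and it is known that they are all the lines on $\mathcal S$. $\mathrm{GL}(\mathcal S)$ denotes the group of automorphisms of $\mathcal S$ which are restrictions of projective linear transformations of $\mathbb P^5$. *)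

theory Defs
  imports "HOL-Computational_Algebra.Polynomial" "Jordan_Normal_Form.Matrix"
begin

text \<open>Points of P^5 are represented by nonzero vectors (p_0,...,p_5) in 'a^6
  (vectors of dimension 6, indices 0..5), identified with P(X) = sum p_j X^j;
  two vectors represent the same point iff they are proportional.
  The roots theta_1..theta_6 are indexed by 1..6.\<close>

definition proj_eq :: "'a::field vec \<Rightarrow> 'a vec \<Rightarrow> bool" where
  "proj_eq u v \<longleftrightarrow> (\<exists>c. c \<noteq> 0 \<and> u = c \<cdot>\<^sub>v v)"

definition is_proj_point :: "'a::field vec \<Rightarrow> bool" where
  "is_proj_point p \<longleftrightarrow> p \<in> carrier_vec 6 \<and> p \<noteq> 0\<^sub>v 6"

definition omega :: "(nat \<Rightarrow> 'a::field) \<Rightarrow> nat \<Rightarrow> 'a" where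
  "omega \<theta> j = (\<Prod>i\<in>{1..6} - {j}. \<theta> j - \<theta> i)"

definition Pval :: "'a::field vec \<Rightarrow> 'a \<Rightarrow> 'a" where
  "Pval p x = (\<Sum>k<6. p $ k * x ^ k)"

definition pi_coord :: "(nat \<Rightarrow> 'a::field) \<Rightarrow> 'a vec \<Rightarrow> nat \<Rightarrow> 'a" where
  "pi_coord \<theta> p j = Pval p (\<theta> j) / omega \<theta> j"

definition on_S :: "(nat \<Rightarrow> 'a::field) \<Rightarrow> 'a vec \<Rightarrow> bool" where
  "on_S \<theta> p \<longleftrightarrow> is_proj_point p \<and>
     (\<forall>i\<in>{0,1,2::nat}. (\<Sum>j\<in>{1..6}. \<theta> j ^ i * omega \<theta> j * (pi_coord \<theta> p j)^2) = 0)"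

definition on_Delta0 :: "'a::field vec \<Rightarrow> bool" where
  "on_Delta0 p \<longleftrightarrow> is_proj_point p \<and> (\<forall>k\<in>{2..5}. p $ k = 0)"

definition in_GL_S :: "(nat \<Rightarrow> 'a::field) \<Rightarrow> 'a mat \<Rightarrow> bool" where
  "in_GL_S \<theta> M \<longleftrightarrow> M \<in> carrier_mat 6 6 \<and> invertible_mat M \<and>
     (\<forall>p. on_S \<theta> p \<longrightarrow> on_S \<theta> (M *\<^sub>v p)) \<and>
     (\<forall>q. on_S \<theta> q \<longrightarrow> (\<exists>p. on_S \<theta> p \<and> proj_eq (M *\<^sub>v p) q))"

end

theory Submission
  imports Defs
begin

text \<open>
  Put C = B^(-1) A.  Then C is an invertible linear map sending the surface S
  into itself, and every point of the line Delta_0 is an eigenvector of C; we show that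
  C is a scalar matrix, whence A and B agree as projectivities.

  Structure.  (1) The coordinates pi_1,...,pi_6 are inverted by Lagrange interpolation at
  the distinct roots; in them S is cut out by three diagonal quadrics.  (2) Let g be the
  matrix of C in these coordinates.  Over an algebraically closed field S has points with
  two prescribed nonzero coordinates; flipping their signs and polarizing (char \<noteq> 2) shows
  that distinct columns of g are orthogonal for the forms sum_m theta_m^i omega_m X_m Y_m.
  (3) Orthogonality for i = 0, 1 plus invertibility forces g to be monomial (locale
  \<open>pi_orthogonal\<close>).  (4) A monomial matrix having every point of Delta_0 as eigenvector is
  scalar, because the roots are distinct.  The main theorem assembles these steps; of the
  polynomial F only the fact that its roots are distinct is used.
\<close>

abbreviation idx6 :: "nat set" where "idx6 \<equiv> {1..6}"

section \<open>Lagrange coordinates\<close>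

text \<open>The Lagrange polynomial P_j = prod_{i \<noteq> j} (X - theta_i); note P_j(theta_j) = omega_j.\<close>
definition lagrange_poly :: "(nat \<Rightarrow> 'a::field) \<Rightarrow> nat \<Rightarrow> 'a poly" where
  "lagrange_poly \<theta> j = (\<Prod>i\<in>idx6 - {j}. [:- \<theta> i, 1:])"

text \<open>The vector of P = sum_l x_l P_l; its pi-coordinates are exactly x (lemma
  \<open>pi_coord_vec_of_pi\<close>), so this inverts the coordinate map.\<close>
definition vec_of_pi :: "(nat \<Rightarrow> 'a::field) \<Rightarrow> (nat \<Rightarrow> 'a) \<Rightarrow> 'a vec" where
  "vec_of_pi \<theta> x = vec 6 (\<lambda>k. \<Sum>l\<in>idx6. x l * coeff (lagrange_poly \<theta> l) k)"

definition kdelta :: "nat \<Rightarrow> nat \<Rightarrow> 'a::field" where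
  "kdelta l = (\<lambda>i. if i = l then 1 else 0)"

lemma vec_of_pi_carrier [simp]: "vec_of_pi \<theta> x \<in> carrier_vec 6"
  by (simp add: vec_of_pi_def)

lemma sum_kdelta:
  assumes "l \<in> idx6" shows "(\<Sum>m\<in>idx6. kdelta l m * f m) = f l"
proof -
  have "(\<Sum>m\<in>idx6. kdelta l m * f m) = (\<Sum>m\<in>idx6. if m = l then f m else 0)"
    by (rule sum.cong) (auto simp: kdelta_def)
  then show ?thesis using assms by simp
qed

lemma omega_nonzero: "inj_on \<theta> idx6 \<Longrightarrow> j \<in> idx6 \<Longrightarrow> omega \<theta> j \<noteq> 0"
  unfolding omega_def inj_on_def by (auto simp: prod_zero_iff)

text \<open>P_j is a product of five linear factors, so it is encoded by a vector of length 6.\<close>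
lemma degree_lagrange_poly: "j \<in> idx6 \<Longrightarrow> degree (lagrange_poly \<theta> j) < 6"
proof -
  assume j: "j \<in> idx6"
  have "degree (lagrange_poly \<theta> j) \<le> sum (degree \<circ> (\<lambda>i. [:- \<theta> i, 1:])) (idx6 - {j})"
    unfolding lagrange_poly_def by (rule degree_prod_sum_le) simp
  also have "\<dots> = 5" using j by simp
  finally show ?thesis by simp
qed

lemma poly_lagrange_poly_root:
  "m \<in> idx6 \<Longrightarrow> j \<in> idx6 \<Longrightarrow> poly (lagrange_poly \<theta> j) (\<theta> m) = (if m = j then omega \<theta> j else 0)"
  by (cases "m = j") (auto simp: lagrange_poly_def poly_prod omega_def prod_zero_iff)

lemma sum_coeff_eq_poly:
  fixes p :: "'a::comm_semiring_1 poly" assumes "degree p < n"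
  shows "(\<Sum>k<n. coeff p k * x ^ k) = poly p x"
proof -
  have "poly p x = (\<Sum>k\<le>degree p. coeff p k * x ^ k)" by (rule poly_altdef)
  also have "\<dots> = (\<Sum>k<n. coeff p k * x ^ k)"
    by (rule sum.mono_neutral_left) (use assms in \<open>auto simp: coeff_eq_0\<close>)
  finally show ?thesis by simp
qed

lemma Pval_vec_of_pi: "Pval (vec_of_pi \<theta> x) y = (\<Sum>l\<in>idx6. x l * poly (lagrange_poly \<theta> l) y)"
proof -
  have "Pval (vec_of_pi \<theta> x) y = (\<Sum>k<6. (\<Sum>l\<in>idx6. x l * coeff (lagrange_poly \<theta> l) k) * y ^ k)"
    by (simp add: Pval_def vec_of_pi_def)
  also have "\<dots> = (\<Sum>l\<in>idx6. x l * (\<Sum>k<6. coeff (lagrange_poly \<theta> l) k * y ^ k))"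
    by (simp add: sum_distrib_left sum_distrib_right mult.assoc) (rule sum.swap)
  also have "\<dots> = (\<Sum>l\<in>idx6. x l * poly (lagrange_poly \<theta> l) y)"
    by (rule sum.cong) (auto simp: sum_coeff_eq_poly degree_lagrange_poly)
  finally show ?thesis .
qed

lemma pi_coord_vec_of_pi:
  assumes "inj_on \<theta> idx6" "m \<in> idx6" shows "pi_coord \<theta> (vec_of_pi \<theta> x) m = x m"
proof -
  have "Pval (vec_of_pi \<theta> x) (\<theta> m) = (\<Sum>l\<in>idx6. if l = m then x m * omega \<theta> m else 0)"
    unfolding Pval_vec_of_pi by (rule sum.cong) (use assms in \<open>auto simp: poly_lagrange_poly_root\<close>)
  then show ?thesis using assms omega_nonzero[OF assms] by (simp add: pi_coord_def)
qed

lemma Pval_vanishing_at_roots: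
  assumes "inj_on \<theta> idx6" "p \<in> carrier_vec 6" "\<forall>m\<in>idx6. Pval p (\<theta> m) = 0"
  shows "p = 0\<^sub>v 6"
proof -
  define D where "D = (\<Sum>k<6. monom (p $ k) k)"
  have poly_D: "poly D y = Pval p y" for y by (simp add: D_def poly_sum poly_monom Pval_def)
  have "degree D \<le> 5" unfolding D_def
    by (rule degree_sum_le) (auto intro: order.trans[OF degree_monom_le])
  moreover have "card (\<theta> ` idx6) = 6" using assms(1) by (simp add: card_image)
  ultimately have "D = 0"
    using assms(3) poly_D by (intro poly_eqI_degree[of "\<theta> ` idx6"]) auto
  have "p $ k = 0" if "k < 6" for k
  proof -
    have "coeff D k = p $ k" using that by (simp add: D_def coeff_sum coeff_monom)
    then show ?thesis using \<open>D = 0\<close> by simp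
  qed
  then show ?thesis using assms(2) by (intro eq_vecI) auto
qed

lemma Pval_diff: "p \<in> carrier_vec 6 \<Longrightarrow> q \<in> carrier_vec 6 \<Longrightarrow> Pval (p - q) y = Pval p y - Pval q y"
  by (simp add: Pval_def sum_subtractf left_diff_distrib)

lemma Pval_smult: "p \<in> carrier_vec 6 \<Longrightarrow> Pval (c \<cdot>\<^sub>v p) y = c * Pval p y"
  by (simp add: Pval_def sum_distrib_left mult.assoc)

lemma pi_coord_smult: "p \<in> carrier_vec 6 \<Longrightarrow> pi_coord \<theta> (c \<cdot>\<^sub>v p) m = c * pi_coord \<theta> p m"
  by (simp add: pi_coord_def Pval_smult)

lemma pi_coord_inj:
  assumes inj: "inj_on \<theta> idx6" and p: "p \<in> carrier_vec 6" and q: "q \<in> carrier_vec 6"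
    and eq: "\<forall>m\<in>idx6. pi_coord \<theta> p m = pi_coord \<theta> q m"
  shows "p = q"
proof -
  have "\<forall>m\<in>idx6. Pval (p - q) (\<theta> m) = 0"
    using eq omega_nonzero[OF inj] by (auto simp: Pval_diff[OF p q] pi_coord_def)
  then have "p - q = 0\<^sub>v 6" using inj p q by (intro Pval_vanishing_at_roots) auto
  then have "p $ i = q $ i" if "i < 6" for i
    using that p q by (metis carrier_vecD index_minus_vec(1) index_zero_vec(1) right_minus_eq)
  then show ?thesis using p q by (intro eq_vecI) auto
qed

lemma vec_of_pi_pi_coord: "inj_on \<theta> idx6 \<Longrightarrow> p \<in> carrier_vec 6 \<Longrightarrow> vec_of_pi \<theta> (pi_coord \<theta> p) = p"
  by (rule pi_coord_inj) (auto simp: pi_coord_vec_of_pi)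


section \<open>Matrices in Lagrange coordinates\<close>

definition pi_matrix :: "(nat \<Rightarrow> 'a::field) \<Rightarrow> 'a mat \<Rightarrow> nat \<Rightarrow> nat \<Rightarrow> 'a" where
  "pi_matrix \<theta> C l m = pi_coord \<theta> (C *\<^sub>v vec_of_pi \<theta> (kdelta l)) m"

lemma index_mult_mat_vec_sum:
  "C \<in> carrier_mat nr n \<Longrightarrow> v \<in> carrier_vec n \<Longrightarrow> i < nr \<Longrightarrow> (C *\<^sub>v v) $ i = (\<Sum>k<n. C $$ (i,k) * v $ k)"
  by (simp add: scalar_prod_def row_def lessThan_atLeast0)

lemma index_mult_vec_of_pi:
  assumes C: "C \<in> carrier_mat 6 6" and i: "i < 6"
  shows "(C *\<^sub>v vec_of_pi \<theta> x) $ i = (\<Sum>l\<in>idx6. x l * (C *\<^sub>v vec_of_pi \<theta> (kdelta l)) $ i)"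
proof -
  have unit: "vec_of_pi \<theta> (kdelta l) $ k = coeff (lagrange_poly \<theta> l) k" if "l \<in> idx6" "k < 6" for l k
    using that sum_kdelta[OF that(1), of "\<lambda>l. coeff (lagrange_poly \<theta> l) k"] by (simp add: vec_of_pi_def)
  have "(C *\<^sub>v vec_of_pi \<theta> x) $ i = (\<Sum>k<6. C $$ (i,k) * (\<Sum>l\<in>idx6. x l * coeff (lagrange_poly \<theta> l) k))"
    using C i by (subst index_mult_mat_vec_sum) (auto simp: vec_of_pi_def)
  also have "\<dots> = (\<Sum>l\<in>idx6. x l * (\<Sum>k<6. C $$ (i,k) * coeff (lagrange_poly \<theta> l) k))"
    by (simp add: sum_distrib_left mult.left_commute) (rule sum.swap)
  also have "\<dots> = (\<Sum>l\<in>idx6. x l * (C *\<^sub>v vec_of_pi \<theta> (kdelta l)) $ i)"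
    by (rule sum.cong) (use C i in \<open>auto simp: index_mult_mat_vec_sum unit simp del: index_mult_mat_vec\<close>)
  finally show ?thesis .
qed

lemma pi_coord_mult_vec_of_pi:
  assumes C: "C \<in> carrier_mat 6 6"
  shows "pi_coord \<theta> (C *\<^sub>v vec_of_pi \<theta> x) m = (\<Sum>l\<in>idx6. x l * pi_matrix \<theta> C l m)"
proof -
  have "Pval (C *\<^sub>v vec_of_pi \<theta> x) y = (\<Sum>l\<in>idx6. x l * Pval (C *\<^sub>v vec_of_pi \<theta> (kdelta l)) y)" for y
  proof -
    have "Pval (C *\<^sub>v vec_of_pi \<theta> x) y
        = (\<Sum>i<6. (\<Sum>l\<in>idx6. x l * (C *\<^sub>v vec_of_pi \<theta> (kdelta l)) $ i) * y ^ i)"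
      unfolding Pval_def
      by (rule sum.cong) (use C in \<open>auto simp: index_mult_vec_of_pi simp del: index_mult_mat_vec\<close>)
    also have "\<dots> = (\<Sum>l\<in>idx6. x l * Pval (C *\<^sub>v vec_of_pi \<theta> (kdelta l)) y)"
      unfolding Pval_def by (simp add: sum_distrib_left sum_distrib_right mult.assoc) (rule sum.swap)
    finally show ?thesis .
  qed
  then show ?thesis by (simp add: pi_coord_def pi_matrix_def sum_divide_distrib)
qed

lemma pi_coord_mult_vec:
  assumes "inj_on \<theta> idx6" "C \<in> carrier_mat 6 6" "v \<in> carrier_vec 6"
  shows "pi_coord \<theta> (C *\<^sub>v v) m = (\<Sum>l\<in>idx6. pi_coord \<theta> v l * pi_matrix \<theta> C l m)"
  using pi_coord_mult_vec_of_pi[OF assms(2), of \<theta> "pi_coord \<theta> v"] vec_of_pi_pi_coord[OF assms(1,3)]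
  by simp

section \<open>Points of the surface\<close>

lemma on_S_carrier: "on_S \<theta> p \<Longrightarrow> p \<in> carrier_vec 6"
  by (simp add: on_S_def is_proj_point_def)

lemma on_S_vec_of_pi:
  assumes inj: "inj_on \<theta> idx6" and j: "j \<in> idx6" "x j \<noteq> 0"
    and quadrics: "\<forall>i\<in>{0,1,2::nat}. (\<Sum>m\<in>idx6. \<theta> m ^ i * omega \<theta> m * (x m)^2) = 0"
  shows "on_S \<theta> (vec_of_pi \<theta> x)"
proof -
  have "vec_of_pi \<theta> x \<noteq> 0\<^sub>v 6"
  proof
    assume "vec_of_pi \<theta> x = 0\<^sub>v 6"
    then have "pi_coord \<theta> (vec_of_pi \<theta> x) j = 0" by (simp add: pi_coord_def Pval_def)
    then show False using pi_coord_vec_of_pi[OF inj j(1)] j by simp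
  qed
  moreover have "(\<Sum>m\<in>idx6. \<theta> m ^ i * omega \<theta> m * (pi_coord \<theta> (vec_of_pi \<theta> x) m)^2)
      = (\<Sum>m\<in>idx6. \<theta> m ^ i * omega \<theta> m * (x m)^2)" for i
    by (rule sum.cong) (auto simp: pi_coord_vec_of_pi[OF inj])
  ultimately show ?thesis using quadrics unfolding on_S_def is_proj_point_def by auto
qed

lemma on_S_smult:
  assumes "on_S \<theta> p" "d \<noteq> 0" shows "on_S \<theta> (d \<cdot>\<^sub>v p)"
proof -
  have p: "p \<in> carrier_vec 6" "p \<noteq> 0\<^sub>v 6" using assms unfolding on_S_def is_proj_point_def by auto
  have "d \<cdot>\<^sub>v p \<noteq> 0\<^sub>v 6"
  proof
    assume "d \<cdot>\<^sub>v p = 0\<^sub>v 6"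
    then have "(1/d) \<cdot>\<^sub>v (d \<cdot>\<^sub>v p) = 0\<^sub>v 6" by auto
    then show False using assms(2) p by (simp add: smult_smult_assoc)
  qed
  moreover have "(\<Sum>j\<in>idx6. \<theta> j ^ i * omega \<theta> j * (pi_coord \<theta> (d \<cdot>\<^sub>v p) j)^2)
     = d^2 * (\<Sum>j\<in>idx6. \<theta> j ^ i * omega \<theta> j * (pi_coord \<theta> p j)^2)" for i
    using p(1) by (simp add: pi_coord_smult sum_distrib_left power_mult_distrib mult_ac)
  ultimately show ?thesis using assms p(1) unfolding on_S_def is_proj_point_def by auto
qed

lemma square_root_exists:
  assumes "\<forall>q::'a::field poly. degree q \<ge> 1 \<longrightarrow> (\<exists>x. poly q x = 0)"
  shows "\<exists>r. r * r = (c::'a)"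
proof -
  have "degree [:-c, 0, 1:] \<ge> 1" by simp
  then obtain r where "poly [:-c, 0, 1:] r = 0" using assms by blast
  then show ?thesis by (auto simp: algebra_simps)
qed

lemma partial_fraction_identity:
  fixes a b c d :: "'a::field"
  assumes "a \<noteq> b" "a \<noteq> c" "a \<noteq> d" "b \<noteq> c" "b \<noteq> d" "c \<noteq> d" and "i \<le> 2"
  shows "a^i/((a-b)*(a-c)*(a-d)) + b^i/((b-a)*(b-c)*(b-d)) + c^i/((c-a)*(c-b)*(c-d))
     + d^i/((d-a)*(d-b)*(d-c)) = 0"
proof -
  define V where "V = (a-b)*(a-c)*(a-d)*(b-c)*(b-d)*(c-d)"
  have V: "V \<noteq> 0" using assms by (simp add: V_def)
  have e1: "a^i/((a-b)*(a-c)*(a-d)) = a^i*((b-c)*(b-d)*(c-d)) / V"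
    using assms V by (simp add: frac_eq_eq V_def, (simp add: algebra_simps)?)
  have e2: "b^i/((b-a)*(b-c)*(b-d)) = (b^i*((c-a)*(a-d)*(c-d))) / V"
    using assms V by (simp add: frac_eq_eq V_def, (simp add: algebra_simps)?)
  have e3: "c^i/((c-a)*(c-b)*(c-d)) = c^i*((a-b)*(a-d)*(b-d)) / V"
    using assms V by (simp add: frac_eq_eq V_def, (simp add: algebra_simps)?)
  have e4: "d^i/((d-a)*(d-b)*(d-c)) = (d^i*((b-a)*(a-c)*(b-c))) / V"
    using assms V by (simp add: frac_eq_eq V_def, (simp add: algebra_simps)?)
  have num: "a^i*((b-c)*(b-d)*(c-d)) + (b^i*((c-a)*(a-d)*(c-d))) + c^i*((a-b)*(a-d)*(b-d))
      + (d^i*((b-a)*(a-c)*(b-c))) = 0"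
  proof -
    have "i = 0 \<or> i = 1 \<or> i = 2" using assms(7) by auto
    then show ?thesis by (elim disjE) (simp_all add: power2_eq_square algebra_simps)
  qed
  show ?thesis unfolding e1 e2 e3 e4 add_divide_distrib[symmetric] num by simp
qed

lemma two_more_indices:
  assumes "j \<in> idx6" "k \<in> idx6" "j \<noteq> k"
  obtains u v where "u \<in> idx6" "v \<in> idx6" "j \<noteq> u" "j \<noteq> v" "k \<noteq> u" "k \<noteq> v" "u \<noteq> v"
proof -
  have "card (idx6 - {j,k}) = 4" using assms by (subst card_Diff_subset) auto
  then obtain u where u: "u \<in> idx6 - {j,k}" by (metis card.empty ex_in_conv zero_neq_numeral)
  have "card (idx6 - {j,k} - {u}) = 3" using \<open>card (idx6 - {j,k}) = 4\<close> u by simp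
  then obtain v where v: "v \<in> idx6 - {j,k} - {u}" by (metis card.empty ex_in_conv zero_neq_numeral)
  show ?thesis using that u v by blast
qed

text \<open>Over an algebraically closed field, for any two distinct indices j, k there is a point
  of S with pi_j, pi_k \<noteq> 0: take pi_m^2 omega_m = 1/prod(theta_m - theta_n) on four indices
  including j, k and pi_m = 0 elsewhere.\<close>
lemma point_on_S_two_nonzero:
  assumes alg: "\<forall>q::'a::field poly. degree q \<ge> 1 \<longrightarrow> (\<exists>x. poly q x = 0)"
    and inj: "inj_on (\<theta>::nat\<Rightarrow>'a) idx6" and j: "j \<in> idx6" and k: "k \<in> idx6" and jk: "j \<noteq> k"
  obtains x where "x j \<noteq> 0" "x k \<noteq> 0"
    "\<forall>i\<in>{0,1,2::nat}. (\<Sum>m\<in>idx6. \<theta> m ^ i * omega \<theta> m * (x m)^2) = 0"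
proof -
  obtain u v where uvI: "u \<in> idx6" "v \<in> idx6" and dis: "j \<noteq> u" "j \<noteq> v" "k \<noteq> u" "k \<noteq> v" "u \<noteq> v"
    using two_more_indices[OF j k jk] by blast
  have th: "\<theta> j \<noteq> \<theta> k" "\<theta> j \<noteq> \<theta> u" "\<theta> j \<noteq> \<theta> v" "\<theta> k \<noteq> \<theta> u" "\<theta> k \<noteq> \<theta> v" "\<theta> u \<noteq> \<theta> v"
    using inj j k uvI dis jk unfolding inj_on_def by metis+
  define a where "a m = (if m = j then 1/((\<theta> j-\<theta> k)*(\<theta> j-\<theta> u)*(\<theta> j-\<theta> v))
     else if m = k then 1/((\<theta> k-\<theta> j)*(\<theta> k-\<theta> u)*(\<theta> k-\<theta> v))
     else if m = u then 1/((\<theta> u-\<theta> j)*(\<theta> u-\<theta> k)*(\<theta> u-\<theta> v))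
     else if m = v then 1/((\<theta> v-\<theta> j)*(\<theta> v-\<theta> k)*(\<theta> v-\<theta> u)) else 0)" for m
  define x where "x m = (SOME r. r * r = a m / omega \<theta> m)" for m
  have x_sq: "omega \<theta> m * (x m)^2 = a m" if "m \<in> idx6" for m
  proof -
    have "x m * x m = a m / omega \<theta> m" unfolding x_def by (rule someI_ex) (rule square_root_exists[OF alg])
    then show ?thesis using omega_nonzero[OF inj that] by (simp add: power2_eq_square field_simps)
  qed
  have "a j \<noteq> 0" "a k \<noteq> 0" using th jk by (auto simp: a_def)
  then have "x j \<noteq> 0" "x k \<noteq> 0" using x_sq[OF j] x_sq[OF k] by auto
  moreover have "(\<Sum>m\<in>idx6. \<theta> m ^ i * omega \<theta> m * (x m)^2) = 0" if "i \<in> {0,1,2}" for i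
  proof -
    from that have i: "i \<le> 2" by auto
    have "(\<Sum>m\<in>idx6. \<theta> m ^ i * omega \<theta> m * (x m)^2) = (\<Sum>m\<in>idx6. \<theta> m ^ i * a m)"
      by (rule sum.cong) (auto simp: x_sq mult.assoc)
    also have "\<dots> = (\<Sum>m\<in>{j,k,u,v}. \<theta> m ^ i * a m)"
      by (rule sum.mono_neutral_right) (use j k uvI in \<open>auto simp: a_def\<close>)
    also have "\<dots> = \<theta> j ^ i * a j + \<theta> k ^ i * a k + \<theta> u ^ i * a u + \<theta> v ^ i * a v"
      using dis jk by (simp add: add.assoc)
    also have "\<dots> = 0"
      using partial_fraction_identity[OF th i] dis jk by (simp add: a_def)
    finally show ?thesis .
  qed
  ultimately show ?thesis using that by blast
qed

section \<open>Orthogonality of the columns\<close>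

text \<open>Polarization with four sign choices isolates the mixed term a*b.\<close>
lemma sign_change_identity:
  fixes w a b r :: "'b \<Rightarrow> 'a::comm_ring_1"
  shows "(\<Sum>m\<in>M. w m * (a m + b m + r m)^2) - (\<Sum>m\<in>M. w m * (-a m + b m + r m)^2)
   - (\<Sum>m\<in>M. w m * (a m - b m + r m)^2) + (\<Sum>m\<in>M. w m * (-a m - b m + r m)^2)
   = 8 * (\<Sum>m\<in>M. w m * a m * b m)"
  by (simp add: sum_subtractf[symmetric] sum.distrib[symmetric] sum_distrib_left)
     (rule sum.cong, simp_all add: algebra_simps power2_eq_square)

lemma sum_remove_two:
  assumes "finite A" "j \<in> A" "k \<in> A" "j \<noteq> k"
  shows "(\<Sum>l\<in>A. f l) = f j + f k + (\<Sum>l\<in>A - {j,k}. f l)"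
proof -
  have "(\<Sum>l\<in>A. f l) = f j + (\<Sum>l\<in>A - {j}. f l)" using assms by (simp add: sum.remove)
  also have "(\<Sum>l\<in>A - {j}. f l) = f k + (\<Sum>l\<in>A - {j} - {k}. f l)" using assms by (simp add: sum.remove)
  finally show ?thesis by (simp add: add.assoc Diff_insert2[symmetric] insert_commute)
qed

lemma image_on_quadrics:
  assumes inj: "inj_on \<theta> idx6" and C: "C \<in> carrier_mat 6 6"
    and maps_S: "\<forall>p. on_S \<theta> p \<longrightarrow> on_S \<theta> (C *\<^sub>v p)"
    and x: "j \<in> idx6" "x j \<noteq> 0" "\<forall>i\<in>{0,1,2::nat}. (\<Sum>m\<in>idx6. \<theta> m ^ i * omega \<theta> m * (x m)^2) = 0"
    and i: "i \<in> {0,1,2::nat}"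
  shows "(\<Sum>m\<in>idx6. \<theta> m ^ i * omega \<theta> m * (\<Sum>l\<in>idx6. x l * pi_matrix \<theta> C l m)^2) = 0"
proof -
  have "on_S \<theta> (C *\<^sub>v vec_of_pi \<theta> x)" using maps_S on_S_vec_of_pi[OF inj x] by blast
  then show ?thesis using i unfolding on_S_def pi_coord_mult_vec_of_pi[OF C] by blast
qed

lemma eight_nonzero: "(2::'a::field) \<noteq> 0 \<Longrightarrow> (8::'a) \<noteq> 0"
proof -
  assume "(2::'a) \<noteq> 0"
  moreover have "(8::'a) = 2 * 2 * 2" by simp
  ultimately show ?thesis by (simp only: mult_eq_0_iff) simp
qed

text \<open>Take a point x of S with x_j, x_k \<noteq> 0; the four points
  (\<plusminus>x_j, \<plusminus>x_k, rest of x) lie on S, hence so do their images, and polarization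
  extracts 8 x_j x_k times the mixed sum.\<close>
lemma columns_orthogonal:
  assumes alg: "\<forall>q::'a::field poly. degree q \<ge> 1 \<longrightarrow> (\<exists>x. poly q x = 0)"
    and char2: "(2::'a) \<noteq> 0" and inj: "inj_on (\<theta>::nat\<Rightarrow>'a) idx6" and C: "C \<in> carrier_mat 6 6"
    and maps_S: "\<forall>p. on_S \<theta> p \<longrightarrow> on_S \<theta> (C *\<^sub>v p)"
    and j: "j \<in> idx6" and k: "k \<in> idx6" and jk: "j \<noteq> k" and i: "i \<in> {0,1,2::nat}"
  shows "(\<Sum>m\<in>idx6. \<theta> m ^ i * omega \<theta> m * pi_matrix \<theta> C j m * pi_matrix \<theta> C k m) = 0"
proof -
  let ?g = "pi_matrix \<theta> C"
  obtain x where xj: "x j \<noteq> 0" and xk: "x k \<noteq> 0"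
    and on_quadrics: "\<forall>i\<in>{0,1,2::nat}. (\<Sum>m\<in>idx6. \<theta> m ^ i * omega \<theta> m * (x m)^2) = 0"
    using point_on_S_two_nonzero[OF alg inj j k jk] by blast
  define w where "w m = \<theta> m ^ i * omega \<theta> m" for m
  define a where "a m = x j * ?g j m" for m
  define b where "b m = x k * ?g k m" for m
  define r where "r m = (\<Sum>l\<in>idx6 - {j,k}. x l * ?g l m)" for m
  have signed: "(\<Sum>m\<in>idx6. w m * (s * a m + t * b m + r m)^2) = 0" if "s*s = 1" "t*t = 1" for s t
  proof -
    define y where "y = x(j := s * x j, k := t * x k)"
    have "y j \<noteq> 0" using xj jk \<open>s*s = 1\<close> by (auto simp: y_def)
    moreover have "(y m)^2 = (x m)^2" for m
      using that by (auto simp: y_def power2_eq_square algebra_simps)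
    moreover have "(\<Sum>l\<in>idx6. y l * ?g l m) = s * a m + t * b m + r m" for m
      unfolding sum_remove_two[OF finite_atLeastAtMost j k jk] r_def using jk
      by (simp add: y_def a_def b_def mult.assoc)
    ultimately show ?thesis
      using image_on_quadrics[OF inj C maps_S j, of y i] on_quadrics i by (simp add: w_def)
  qed
  have "8 * (\<Sum>m\<in>idx6. w m * a m * b m) = 0"
    using sign_change_identity[of w a b r idx6] signed[of 1 1] signed[of "-1" 1] signed[of 1 "-1"]
      signed[of "-1" "-1"] by simp
  moreover have "(\<Sum>m\<in>idx6. w m * a m * b m)
      = x j * x k * (\<Sum>m\<in>idx6. \<theta> m ^ i * omega \<theta> m * ?g j m * ?g k m)"
    by (simp add: sum_distrib_left w_def a_def b_def algebra_simps)
  ultimately show ?thesis using xj xk eight_nonzero[OF char2] by simp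
qed

section \<open>Orthogonal columns force a monomial matrix\<close>

lemma mult_vec_left_inverse:
  fixes C Ci :: "'a::field mat"
  assumes "C \<in> carrier_mat n n" "Ci \<in> carrier_mat n n" "Ci * C = 1\<^sub>m n" "v \<in> carrier_vec n"
  shows "Ci *\<^sub>v (C *\<^sub>v v) = v"
proof -
  have "(Ci * C) *\<^sub>v v = Ci *\<^sub>v (C *\<^sub>v v)" using assms(2,1,4) by (rule assoc_mult_mat_vec)
  then show ?thesis using assms(3) one_mult_mat_vec[OF assms(4)] by simp
qed

lemma pi_coord_zero [simp]: "pi_coord \<theta> (0\<^sub>v 6) m = 0"
  by (simp add: pi_coord_def Pval_def)

locale pi_orthogonal =
  fixes \<theta> :: "nat \<Rightarrow> 'a::field" and C Ci :: "'a mat"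
  assumes inj: "inj_on \<theta> idx6"
    and C: "C \<in> carrier_mat 6 6" and Ci: "Ci \<in> carrier_mat 6 6"
    and right_inverse: "C * Ci = 1\<^sub>m 6" and left_inverse: "Ci * C = 1\<^sub>m 6"
    and orthogonal: "\<And>j k i. j \<in> idx6 \<Longrightarrow> k \<in> idx6 \<Longrightarrow> j \<noteq> k \<Longrightarrow> i \<le> 1 \<Longrightarrow>
      (\<Sum>m\<in>idx6. \<theta> m ^ i * omega \<theta> m * pi_matrix \<theta> C j m * pi_matrix \<theta> C k m) = 0"
begin

abbreviation g :: "nat \<Rightarrow> nat \<Rightarrow> 'a" where "g \<equiv> pi_matrix \<theta> C"

lemma kernel_trivial:
  assumes "v \<in> carrier_vec 6" "C *\<^sub>v v = 0\<^sub>v 6" shows "v = 0\<^sub>v 6"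
proof -
  have "v = Ci *\<^sub>v (C *\<^sub>v v)" using mult_vec_left_inverse[OF C Ci left_inverse assms(1)] by simp
  then show ?thesis using assms(2) Ci by auto
qed

lemma column_nonzero:
  assumes j: "j \<in> idx6" shows "\<exists>m\<in>idx6. g j m \<noteq> 0"
proof (rule ccontr)
  assume "\<not> ?thesis"
  then have "C *\<^sub>v vec_of_pi \<theta> (kdelta j) = 0\<^sub>v 6"
    using C by (intro pi_coord_inj[OF inj]) (auto simp: pi_matrix_def)
  then have "vec_of_pi \<theta> (kdelta j) = 0\<^sub>v 6" by (rule kernel_trivial[rotated]) simp
  then have "pi_coord \<theta> (vec_of_pi \<theta> (kdelta j)) j = 0" by simp
  then show False using pi_coord_vec_of_pi[OF inj j] by (simp add: kdelta_def)
qed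

text \<open>The columns of g span everything (C is surjective), so a vector omega-orthogonal to
  all columns vanishes.\<close>
lemma orthogonal_to_columns_imp_zero:
  assumes h: "\<forall>k\<in>idx6. (\<Sum>m\<in>idx6. omega \<theta> m * g k m * h m) = 0" and n: "n \<in> idx6"
  shows "h n = 0"
proof -
  have functional_zero: "(\<Sum>m\<in>idx6. omega \<theta> m * h m * pi_coord \<theta> (C *\<^sub>v v) m) = 0"
    if v: "v \<in> carrier_vec 6" for v
  proof -
    have "(\<Sum>m\<in>idx6. omega \<theta> m * h m * pi_coord \<theta> (C *\<^sub>v v) m)
        = (\<Sum>m\<in>idx6. \<Sum>l\<in>idx6. pi_coord \<theta> v l * (omega \<theta> m * g l m * h m))"
      by (simp add: pi_coord_mult_vec[OF inj C v] sum_distrib_left mult_ac)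
    also have "\<dots> = (\<Sum>l\<in>idx6. pi_coord \<theta> v l * (\<Sum>m\<in>idx6. omega \<theta> m * g l m * h m))"
      by (subst sum.swap) (simp add: sum_distrib_left)
    also have "\<dots> = 0" using h by simp
    finally show ?thesis .
  qed
  have "C *\<^sub>v (Ci *\<^sub>v vec_of_pi \<theta> (kdelta n)) = vec_of_pi \<theta> (kdelta n)"
    using mult_vec_left_inverse[OF Ci C right_inverse] by simp
  then have "(\<Sum>m\<in>idx6. omega \<theta> m * h m * pi_coord \<theta> (vec_of_pi \<theta> (kdelta n)) m) = 0"
    using functional_zero[of "Ci *\<^sub>v vec_of_pi \<theta> (kdelta n)"] Ci by simp
  also have "(\<Sum>m\<in>idx6. omega \<theta> m * h m * pi_coord \<theta> (vec_of_pi \<theta> (kdelta n)) m)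
      = (\<Sum>m\<in>idx6. kdelta n m * (omega \<theta> m * h m))"
    by (rule sum.cong) (auto simp: pi_coord_vec_of_pi[OF inj] kdelta_def)
  also have "\<dots> = omega \<theta> n * h n" by (rule sum_kdelta[OF n])
  finally show ?thesis using omega_nonzero[OF inj n] by simp
qed

lemma column_anisotropic:
  assumes j: "j \<in> idx6" shows "(\<Sum>m\<in>idx6. omega \<theta> m * g j m * g j m) \<noteq> 0"
proof
  assume isotropic: "(\<Sum>m\<in>idx6. omega \<theta> m * g j m * g j m) = 0"
  have "(\<Sum>m\<in>idx6. omega \<theta> m * g k m * g j m) = 0" if k: "k \<in> idx6" for k
    using isotropic orthogonal[OF k j, of 0] by (cases "k = j") auto
  then have "\<forall>n\<in>idx6. g j n = 0" using orthogonal_to_columns_imp_zero by blast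
  then show False using column_nonzero[OF j] by blast
qed

text \<open>\<dots> and has exactly one nonzero entry: with lambda chosen so that (theta - lambda) g_j is
  orthogonal to g_j, this vector is orthogonal to all columns, so theta_m = lambda on the
  support of g_j.\<close>
lemma column_support_unique:
  assumes j: "j \<in> idx6" and m: "m \<in> idx6" "g j m \<noteq> 0" and m': "m' \<in> idx6" "g j m' \<noteq> 0"
  shows "m = m'"
proof -
  define b0 where "b0 = (\<Sum>n\<in>idx6. omega \<theta> n * g j n * g j n)"
  define b1 where "b1 = (\<Sum>n\<in>idx6. \<theta> n * omega \<theta> n * g j n * g j n)"
  define h where "h n = (\<theta> n - b1 / b0) * g j n" for n
  have "b0 \<noteq> 0" using column_anisotropic[OF j] by (simp add: b0_def)
  have "(\<Sum>n\<in>idx6. omega \<theta> n * g k n * h n) = 0" if k: "k \<in> idx6" for k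
  proof -
    have expand: "(\<Sum>n\<in>idx6. omega \<theta> n * g k n * h n) =
      (\<Sum>n\<in>idx6. \<theta> n * omega \<theta> n * g k n * g j n) - b1 / b0 * (\<Sum>n\<in>idx6. omega \<theta> n * g k n * g j n)"
      by (simp add: h_def sum_distrib_left sum_subtractf[symmetric] algebra_simps)
    show ?thesis
    proof (cases "k = j")
      case True
      show ?thesis
        unfolding expand unfolding True b0_def[symmetric] b1_def[symmetric] using \<open>b0 \<noteq> 0\<close> by simp
    next
      case False
      then show ?thesis unfolding expand using orthogonal[OF k j False, of 0] orthogonal[OF k j False, of 1] by simp
    qed
  qed
  then have "\<forall>n\<in>idx6. h n = 0" using orthogonal_to_columns_imp_zero by blast
  then have "\<theta> m = b1 / b0" "\<theta> m' = b1 / b0" using m m' by (auto simp: h_def)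
  then show ?thesis using inj m(1) m'(1) unfolding inj_on_def by auto
qed

lemma row_support_unique:
  assumes j: "j \<in> idx6" and k: "k \<in> idx6" and jk: "j \<noteq> k" and m: "m \<in> idx6" and gj: "g j m \<noteq> 0"
  shows "g k m = 0"
proof (rule ccontr)
  assume gk: "g k m \<noteq> 0"
  have "(\<Sum>n\<in>idx6. \<theta> n ^ 0 * omega \<theta> n * g j n * g k n)
      = (\<Sum>n\<in>idx6. if n = m then omega \<theta> m * g j m * g k m else 0)"
    by (rule sum.cong) (use column_support_unique[OF j m gj] in auto)
  then show False using orthogonal[OF j k jk, of 0] omega_nonzero[OF inj m] gj gk m by simp
qed

lemma monomial:
  assumes m: "m \<in> idx6"
  obtains l where "l \<in> idx6" "\<And>v. v \<in> carrier_vec 6 \<Longrightarrow> pi_coord \<theta> (C *\<^sub>v v) m = pi_coord \<theta> v l * g l m"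
proof -
  obtain l where l: "l \<in> idx6" and others: "\<forall>k\<in>idx6. k \<noteq> l \<longrightarrow> g k m = 0"
  proof (cases "\<exists>l\<in>idx6. g l m \<noteq> 0")
    case True
    then show ?thesis using row_support_unique m that by metis
  next
    case False
    then show ?thesis using that m by blast
  qed
  have "pi_coord \<theta> (C *\<^sub>v v) m = pi_coord \<theta> v l * g l m" if v: "v \<in> carrier_vec 6" for v
  proof -
    have "pi_coord \<theta> (C *\<^sub>v v) m = (\<Sum>k\<in>idx6. if k = l then pi_coord \<theta> v l * g l m else 0)"
      unfolding pi_coord_mult_vec[OF inj C v] by (rule sum.cong) (use others in auto)
    then show ?thesis using l by simp
  qed
  then show ?thesis using l that by blast
qed

end

section \<open>The line Delta_0\<close>

definition line_vec :: "'a::field \<Rightarrow> 'a \<Rightarrow> 'a vec" where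
  "line_vec a b = vec 6 (\<lambda>k. if k = 0 then a else if k = 1 then b else 0)"

lemma line_vec_carrier [simp]: "line_vec a b \<in> carrier_vec 6"
  by (simp add: line_vec_def)

lemma line_vec_decompose: "line_vec a b = a \<cdot>\<^sub>v line_vec 1 0 + b \<cdot>\<^sub>v line_vec 0 1"
  by (intro eq_vecI) (auto simp: line_vec_def)

lemma on_Delta0_line_vec: "a \<noteq> 0 \<or> b \<noteq> 0 \<Longrightarrow> on_Delta0 (line_vec a b)"
proof -
  assume "a \<noteq> 0 \<or> b \<noteq> 0"
  then have "line_vec a b $ 0 \<noteq> 0\<^sub>v 6 $ 0 \<or> line_vec a b $ 1 \<noteq> 0\<^sub>v 6 $ 1" by (simp add: line_vec_def)
  then have "line_vec a b \<noteq> 0\<^sub>v 6" by metis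
  then show ?thesis unfolding on_Delta0_def is_proj_point_def by (simp add: line_vec_def)
qed

lemma pi_coord_line_vec: "pi_coord \<theta> (line_vec a b) m = (a + b * \<theta> m) / omega \<theta> m"
  by (simp add: pi_coord_def Pval_def line_vec_def numeral_eq_Suc lessThan_Suc)

text \<open>A linear map having every point of a line as eigenvector is scalar on that line: the
  eigenvalues at (1:0), (0:1) and (1:1) must coincide.\<close>
lemma Delta0_eigenvectors_scalar:
  assumes C: "C \<in> carrier_mat n 6" and eigen: "\<forall>p. on_Delta0 p \<longrightarrow> (\<exists>c. C *\<^sub>v p = c \<cdot>\<^sub>v p)"
  obtains c where "\<And>a b. C *\<^sub>v line_vec a b = c \<cdot>\<^sub>v line_vec a b"
proof -
  have linear: "C *\<^sub>v line_vec a b = a \<cdot>\<^sub>v (C *\<^sub>v line_vec 1 0) + b \<cdot>\<^sub>v (C *\<^sub>v line_vec 0 1)" for a b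
  proof -
    have "C *\<^sub>v line_vec a b = C *\<^sub>v (a \<cdot>\<^sub>v line_vec 1 0) + C *\<^sub>v (b \<cdot>\<^sub>v line_vec 0 1)"
      by (subst line_vec_decompose) (rule mult_add_distrib_mat_vec[OF C]; simp)
    then show ?thesis by (simp only: mult_mat_vec[OF C line_vec_carrier])
  qed
  have eigen_line: "\<exists>c. C *\<^sub>v line_vec a b = c \<cdot>\<^sub>v line_vec a b" if "a \<noteq> 0 \<or> b \<noteq> 0" for a b
    using eigen on_Delta0_line_vec[OF that] by blast
  obtain c0 where c0: "C *\<^sub>v line_vec 1 0 = c0 \<cdot>\<^sub>v line_vec 1 0"
    using eigen_line[of 1 0, OF disjI1[OF one_neq_zero]] by blast
  obtain c1 where c1: "C *\<^sub>v line_vec 0 1 = c1 \<cdot>\<^sub>v line_vec 0 1"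
    using eigen_line[of 0 1, OF disjI2[OF one_neq_zero]] by blast
  obtain c2 where c2: "C *\<^sub>v line_vec 1 1 = c2 \<cdot>\<^sub>v line_vec 1 1"
    using eigen_line[of 1 1, OF disjI1[OF one_neq_zero]] by blast
  have sum_eigen: "c2 \<cdot>\<^sub>v line_vec 1 1 = c0 \<cdot>\<^sub>v line_vec 1 0 + c1 \<cdot>\<^sub>v line_vec 0 1"
    using linear[of 1 1] by (simp only: c0 c1 c2 scalar_vec_one)
  have "c0 = c2" using arg_cong[where f = "\<lambda>v. v $ 0", OF sum_eigen] by (simp add: line_vec_def)
  moreover have "c1 = c2" using arg_cong[where f = "\<lambda>v. v $ 1", OF sum_eigen] by (simp add: line_vec_def)
  ultimately have "C *\<^sub>v line_vec a b = c0 \<cdot>\<^sub>v line_vec a b" for a b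
    using linear[of a b] c0 c1 by (intro eq_vecI) (auto simp: line_vec_def)
  then show ?thesis using that by blast
qed

text \<open>A monomial matrix fixing Delta_0 pointwise is scalar: on (1:0) and (0:1) the coordinate
  relations give theta_m = theta_l for the unique l feeding coordinate m, so l = m.\<close>
lemma (in pi_orthogonal) scalar:
  assumes eigen: "\<forall>p. on_Delta0 p \<longrightarrow> (\<exists>c. C *\<^sub>v p = c \<cdot>\<^sub>v p)"
  obtains \<mu> where "\<mu> \<noteq> 0" "\<And>v. v \<in> carrier_vec 6 \<Longrightarrow> C *\<^sub>v v = \<mu> \<cdot>\<^sub>v v"
proof -
  obtain c where c: "\<And>a b. C *\<^sub>v line_vec a b = c \<cdot>\<^sub>v line_vec a b"
    using Delta0_eigenvectors_scalar[OF C eigen] by blast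
  have "c \<noteq> 0"
  proof
    assume "c = 0"
    then have "C *\<^sub>v line_vec 1 0 = 0\<^sub>v 6"
      using c[of 1 0] by (intro eq_vecI) (auto simp: line_vec_def)
    then have "line_vec (1::'a) 0 = 0\<^sub>v 6" by (rule kernel_trivial[rotated]) simp
    from arg_cong[where f = "\<lambda>v. v $ 0", OF this] show False by (simp add: line_vec_def)
  qed
  have diagonal: "pi_coord \<theta> (C *\<^sub>v v) m = c * pi_coord \<theta> v m"
    if v: "v \<in> carrier_vec 6" and m: "m \<in> idx6" for v m
  proof -
    obtain l where l: "l \<in> idx6"
      and mono: "\<And>v. v \<in> carrier_vec 6 \<Longrightarrow> pi_coord \<theta> (C *\<^sub>v v) m = pi_coord \<theta> v l * g l m"
      using monomial[OF m] by blast
    have on_line: "c * ((a + b * \<theta> m) / omega \<theta> m) = (a + b * \<theta> l) / omega \<theta> l * g l m" for a b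
      using mono[of "line_vec a b"] c[of a b] by (simp add: pi_coord_smult pi_coord_line_vec)
    have wm: "omega \<theta> m \<noteq> 0" and wl: "omega \<theta> l \<noteq> 0" using omega_nonzero[OF inj] m l by auto
    have entry: "g l m = c * omega \<theta> l / omega \<theta> m"
      using on_line[of 1 0] wm wl by (simp add: field_simps)
    have "c * \<theta> m = c * \<theta> l"
      using on_line[of 0 1] wm wl unfolding entry by (simp add: field_simps)
    then have "l = m" using \<open>c \<noteq> 0\<close> inj l m unfolding inj_on_def by auto
    then show ?thesis using mono[OF v] entry wm by simp
  qed
  have "C *\<^sub>v v = c \<cdot>\<^sub>v v" if v: "v \<in> carrier_vec 6" for v
    using v C by (auto intro!: pi_coord_inj[OF inj] simp: diagonal pi_coord_smult)
  then show ?thesis using that \<open>c \<noteq> 0\<close> by blast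
qed

section \<open>Elements of GL(S)\<close>

lemma invertible_mat_obtain_inverse:
  fixes B :: "'a::field mat"
  assumes "B \<in> carrier_mat n n" "invertible_mat B"
  obtains Bi where "Bi \<in> carrier_mat n n" "B * Bi = 1\<^sub>m n" "Bi * B = 1\<^sub>m n"
proof -
  obtain Bi where right: "B * Bi = 1\<^sub>m (dim_row B)" and left: "Bi * B = 1\<^sub>m (dim_row Bi)"
    using assms(2) unfolding invertible_mat_def inverts_mat_def by blast
  have "dim_col Bi = n"
    using right assms(1) by (metis carrier_matD(1) index_mult_mat(3) index_one_mat(3))
  moreover have "dim_row Bi = n"
    using left assms(1) by (metis carrier_matD(2) index_mult_mat(3) index_one_mat(3))
  ultimately show ?thesis using that right left assms(1) by auto
qed

text \<open>The inverse of an element of GL(S) maps S into S (surjectivity onto S is only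
  projective, hence the rescaling).\<close>
lemma GL_S_inverse_maps_S:
  assumes B: "in_GL_S \<theta> B" and Bi: "Bi \<in> carrier_mat 6 6" "Bi * B = 1\<^sub>m 6" and q: "on_S \<theta> q"
  shows "on_S \<theta> (Bi *\<^sub>v q)"
proof -
  have Bc: "B \<in> carrier_mat 6 6" using B by (simp add: in_GL_S_def)
  obtain p c where p: "on_S \<theta> p" and c: "c \<noteq> 0" and Bp: "B *\<^sub>v p = c \<cdot>\<^sub>v q"
    using B q unfolding in_GL_S_def proj_eq_def by blast
  have "p = Bi *\<^sub>v (B *\<^sub>v p)" using mult_vec_left_inverse[OF Bc Bi on_S_carrier[OF p]] by simp
  also have "\<dots> = c \<cdot>\<^sub>v (Bi *\<^sub>v q)" unfolding Bp using Bi(1) on_S_carrier[OF q] by (rule mult_mat_vec)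
  finally have "(1/c) \<cdot>\<^sub>v p = Bi *\<^sub>v q" using c by (simp add: smult_smult_assoc)
  then show ?thesis using on_S_smult[OF p, of "1/c"] c by simp
qed

lemma GL_S_quotient_pi_orthogonal:
  assumes alg: "\<forall>q::'a::field poly. degree q \<ge> 1 \<longrightarrow> (\<exists>x. poly q x = 0)"
    and char2: "(2::'a) \<noteq> 0" and inj: "inj_on (\<theta>::nat \<Rightarrow> 'a) idx6"
    and A: "in_GL_S \<theta> A" "Ai \<in> carrier_mat 6 6" "A * Ai = 1\<^sub>m 6" "Ai * A = 1\<^sub>m 6"
    and B: "in_GL_S \<theta> B" "Bi \<in> carrier_mat 6 6" "B * Bi = 1\<^sub>m 6" "Bi * B = 1\<^sub>m 6"
  shows "pi_orthogonal \<theta> (Bi * A) (Ai * B)"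
proof -
  have Ac: "A \<in> carrier_mat 6 6" and Bc: "B \<in> carrier_mat 6 6" using A B by (auto simp: in_GL_S_def)
  have inverse: "(X * Y) * (Yi * Xi) = 1\<^sub>m 6"
    if "X \<in> carrier_mat 6 6" "Y \<in> carrier_mat 6 6" "Xi \<in> carrier_mat 6 6" "Yi \<in> carrier_mat 6 6"
       "Y * Yi = 1\<^sub>m 6" "X * Xi = 1\<^sub>m 6" for X Y Xi Yi :: "'a mat"
  proof -
    have "(X * Y) * (Yi * Xi) = X * (Y * (Yi * Xi))"
      using that by (simp add: assoc_mult_mat[of _ 6 6 _ 6 _ 6])
    also have "Y * (Yi * Xi) = (Y * Yi) * Xi" using that by (intro assoc_mult_mat[symmetric]) auto
    finally show ?thesis using that by simp
  qed
  have maps_S: "\<forall>p. on_S \<theta> p \<longrightarrow> on_S \<theta> ((Bi * A) *\<^sub>v p)"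
  proof (intro allI impI)
    fix p assume p: "on_S \<theta> p"
    have "on_S \<theta> (A *\<^sub>v p)" using A(1) p by (simp add: in_GL_S_def)
    then have "on_S \<theta> (Bi *\<^sub>v (A *\<^sub>v p))" by (rule GL_S_inverse_maps_S[OF B(1) B(2) B(4)])
    then show "on_S \<theta> ((Bi * A) *\<^sub>v p)" using B(2) Ac on_S_carrier[OF p] by simp
  qed
  show ?thesis
  proof
    show "Bi * A * (Ai * B) = 1\<^sub>m 6" using inverse[OF B(2) Ac Bc A(2,3) B(4)] .
    show "Ai * B * (Bi * A) = 1\<^sub>m 6" using inverse[OF A(2) Bc Ac B(2,3) A(4)] .
    fix j k i :: nat assume jk: "j \<in> idx6" "k \<in> idx6" "j \<noteq> k" and "i \<le> 1"
    then have "i \<in> {0, 1, 2}" by auto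
    moreover have "Bi * A \<in> carrier_mat 6 6" using B(2) Ac by simp
    ultimately show "(\<Sum>m\<in>idx6. \<theta> m ^ i * omega \<theta> m
        * pi_matrix \<theta> (Bi * A) j m * pi_matrix \<theta> (Bi * A) k m) = 0"
      using columns_orthogonal[OF alg char2 inj _ maps_S jk] by blast
  qed (use inj Ac A(2) Bc B(2) in auto)
qed

lemma proj_eq_iff_quotient_eigen:
  assumes A: "A \<in> carrier_mat 6 6" and B: "B \<in> carrier_mat 6 6" "Bi \<in> carrier_mat 6 6"
    "B * Bi = 1\<^sub>m 6" "Bi * B = 1\<^sub>m 6" and p: "p \<in> carrier_vec 6"
  shows "proj_eq (A *\<^sub>v p) (B *\<^sub>v p) \<longleftrightarrow> (\<exists>c. c \<noteq> 0 \<and> (Bi * A) *\<^sub>v p = c \<cdot>\<^sub>v p)"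
proof -
  have quotient: "(Bi * A) *\<^sub>v p = Bi *\<^sub>v (A *\<^sub>v p)" using B(2) A p by simp
  have "A *\<^sub>v p = c \<cdot>\<^sub>v (B *\<^sub>v p) \<longleftrightarrow> Bi *\<^sub>v (A *\<^sub>v p) = c \<cdot>\<^sub>v p" for c
  proof
    assume "A *\<^sub>v p = c \<cdot>\<^sub>v (B *\<^sub>v p)"
    then show "Bi *\<^sub>v (A *\<^sub>v p) = c \<cdot>\<^sub>v p"
      using mult_mat_vec[OF B(2)] mult_vec_left_inverse[OF B(1,2,4) p] B(1) p by simp
  next
    assume "Bi *\<^sub>v (A *\<^sub>v p) = c \<cdot>\<^sub>v p"
    then show "A *\<^sub>v p = c \<cdot>\<^sub>v (B *\<^sub>v p)"
      using mult_vec_left_inverse[OF B(2,1,3), of "A *\<^sub>v p"] mult_mat_vec[OF B(1) p] A p by simp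
  qed
  then show ?thesis unfolding proj_eq_def quotient by blast
qed

theorem mainTheorem8:
  fixes F :: "'a::field poly" and \<theta> :: "nat \<Rightarrow> 'a" and A B :: "'a mat"
  assumes alg_closed: "\<forall>q::'a poly. degree q \<ge> 1 \<longrightarrow> (\<exists>x. poly q x = 0)"
    and char_not_2: "(2::'a) \<noteq> 0"
    and degF: "degree F = 6"
    and roots: "\<forall>j\<in>{1..6}. poly F (\<theta> j) = 0"
    and distinct: "inj_on \<theta> {1..6}"
    and A: "in_GL_S \<theta> A" and B: "in_GL_S \<theta> B"
    and agree: "\<forall>p. on_Delta0 p \<longrightarrow> proj_eq (A *\<^sub>v p) (B *\<^sub>v p)"
  shows "\<forall>p. on_S \<theta> p \<longrightarrow> proj_eq (A *\<^sub>v p) (B *\<^sub>v p)"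
proof -
  have Ac: "A \<in> carrier_mat 6 6" "invertible_mat A" and Bc: "B \<in> carrier_mat 6 6" "invertible_mat B"
    using A B by (auto simp: in_GL_S_def)
  obtain Ai where Ai: "Ai \<in> carrier_mat 6 6" "A * Ai = 1\<^sub>m 6" "Ai * A = 1\<^sub>m 6"
    using invertible_mat_obtain_inverse[OF Ac] by blast
  obtain Bi where Bi: "Bi \<in> carrier_mat 6 6" "B * Bi = 1\<^sub>m 6" "Bi * B = 1\<^sub>m 6"
    using invertible_mat_obtain_inverse[OF Bc] by blast
  note eigen_iff = proj_eq_iff_quotient_eigen[OF Ac(1) Bc(1) Bi]
  interpret pi_orthogonal \<theta> "Bi * A" "Ai * B"
    using GL_S_quotient_pi_orthogonal[OF alg_closed char_not_2 distinct A Ai B Bi] .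
  have "\<forall>p. on_Delta0 p \<longrightarrow> (\<exists>c. (Bi * A) *\<^sub>v p = c \<cdot>\<^sub>v p)"
    using agree eigen_iff by (auto simp: on_Delta0_def is_proj_point_def)
  then obtain \<mu> where "\<mu> \<noteq> 0" "\<And>v. v \<in> carrier_vec 6 \<Longrightarrow> (Bi * A) *\<^sub>v v = \<mu> \<cdot>\<^sub>v v"
    using scalar by blast
  then show ?thesis using eigen_iff on_S_carrier by blast
qed

end
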